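(* Let $n = 2k+1 > 3$ be an odd integer and $m = 3n-6 = 6k-3$. If an edge-coloring of a complete graph contains no rainbow $n$-cycle, then it contains no rainbow $m$-cycle.
   Context: A coloring is an arbitrary (not necessarily proper) assignment of colors, from an arbitrary set, to the edges of an undirected complete graph; the graph may be finite or infinite. A rainbow $n$-cycle is a cycle through $n$ distinct vertices whose $n$ edges all receive pairwise distinct colors. *)

theory Defs
  imports Main
begin

text \<open>A coloring of the complete graph on the vertex type 'v assigns a color to every
  edge, an edge being a two-element set of vertices. Only values on 2-sets matter.\<close>

definition rainbow_cycle :: "('v set \<Rightarrow> 'c) \<Rightarrow> nat \<Rightarrow> 'v list \<Rightarrow> bool" where
  "rainbow_cycle c n vs \<longleftrightarrow> 3 \<le> n \<and> length vs = n \<and> distinct vs \<and>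
     inj_on (\<lambda>i. c {vs ! i, vs ! ((i + 1) mod n)}) {..<n}"

definition has_rainbow_cycle :: "('v set \<Rightarrow> 'c) \<Rightarrow> nat \<Rightarrow> bool" where
  "has_rainbow_cycle c n \<longleftrightarrow> (\<exists>vs. rainbow_cycle c n vs)"

end

theory Submission
  imports Defs "HOL-Number_Theory.Cong"
begin

(* Write n = 2q+3, so that 3n-6 = 6q+3, and number the vertices of a rainbow (6q+3)-cycle W by
   their positions modulo 6q+3; arc p is the edge from p to p+1. Walking along arcs of W and closing
   up with one or two chords gives n-cycles. None of them is rainbow and the arcs carry distinct
   colors, so some chord repeats the color of the other chord or of an arc on the walk. A few such
   cycles force each chord {r, r+2q+2} to have the color of the first or of the last arc it spans,
   with the same choice for r = 0, 2q+1, 4q+2. Reflecting W we may assume it is the first arc; then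
   nine more cycles through the chords joining q+1, 3q+2, 5q+3 confine the colors of these three
   chords to incompatible ranges of arcs. *)

lemma not_rainbow_chord_repeats_color:
  assumes "\<not> has_rainbow_cycle c n" "3 \<le> n" "length vs = n" "distinct vs"
    and "inj_on (\<lambda>i. c {vs ! i, vs ! ((i + 1) mod n)}) ({..<n} - C)"
  shows "\<exists>i\<in>C. i < n \<and> (\<exists>j<n. j \<noteq> i \<and>
           c {vs ! i, vs ! ((i + 1) mod n)} = c {vs ! j, vs ! ((j + 1) mod n)})"
proof -
  let ?e = "\<lambda>i. c {vs ! i, vs ! ((i + 1) mod n)}"
  have "\<not> inj_on ?e {..<n}"
    using assms(1-4) by (auto simp: has_rainbow_cycle_def rainbow_cycle_def)
  then obtain i j where ij: "i < n" "j < n" "i \<noteq> j" "?e i = ?e j"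
    by (auto simp: inj_on_def)
  with assms(5) have "i \<in> C \<or> j \<in> C"
    by (auto simp: inj_on_def)
  with ij show ?thesis
    by metis
qed

lemma rainbow_cycle_rotate:
  assumes "rainbow_cycle c n vs"
  shows "rainbow_cycle c n (rotate r vs)"
proof -
  define e where "e = (\<lambda>i. c {vs ! i, vs ! ((i + 1) mod n)})"
  define \<sigma> where "\<sigma> i = (r + i) mod n" for i
  have vs: "3 \<le> n" "length vs = n" "distinct vs" "inj_on e {..<n}"
    using assms by (auto simp: rainbow_cycle_def e_def)
  have shift: "c {rotate r vs ! i, rotate r vs ! ((i + 1) mod n)} = e (\<sigma> i)" if "i < n" for i
    using that vs(1,2) by (simp add: nth_rotate mod_simps add.assoc e_def \<sigma>_def)
  have \<sigma>: "inj_on \<sigma> {..<n}" "\<sigma> ` {..<n} \<subseteq> {..<n}"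
    using vs(1) cong_add_lcancel_nat[of r _ _ n] by (auto simp: inj_on_def cong_def \<sigma>_def)
  have "inj_on (e \<circ> \<sigma>) {..<n}"
    using comp_inj_on[OF \<sigma>(1) inj_on_subset[OF vs(4) \<sigma>(2)]] .
  then have "inj_on (\<lambda>i. c {rotate r vs ! i, rotate r vs ! ((i + 1) mod n)}) {..<n}"
    using shift by (simp add: inj_on_def)
  with vs show ?thesis
    by (simp add: rainbow_cycle_def)
qed

lemma rainbow_cycle_rev:
  assumes "rainbow_cycle c n vs"
  shows "rainbow_cycle c n (rev vs)"
proof -
  define e where "e = (\<lambda>i. c {vs ! i, vs ! ((i + 1) mod n)})"
  define \<tau> where "\<tau> i = (if i = n - 1 then n - 1 else n - 2 - i)" for i
  have vs: "3 \<le> n" "length vs = n" "distinct vs" "inj_on e {..<n}"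
    using assms by (auto simp: rainbow_cycle_def e_def)
  have flip: "c {rev vs ! i, rev vs ! ((i + 1) mod n)} = e (\<tau> i)" if "i < n" for i
  proof (cases "i = n - 1")
    case True
    with vs(1,2) show ?thesis by (simp add: rev_nth insert_commute e_def \<tau>_def)
  next
    case False
    with that vs(1) have "Suc i < n" "(i + 1) mod n = Suc i" "\<tau> i = n - Suc (Suc i)"
        "(\<tau> i + 1) mod n = n - Suc i"
      by (auto simp: \<tau>_def)
    with that vs(2) show ?thesis by (simp add: rev_nth insert_commute e_def)
  qed
  have \<tau>: "inj_on \<tau> {..<n}" "\<tau> ` {..<n} \<subseteq> {..<n}"
    using vs(1) by (auto simp: inj_on_def \<tau>_def)
  have "inj_on (e \<circ> \<tau>) {..<n}"
    using comp_inj_on[OF \<tau>(1) inj_on_subset[OF vs(4) \<tau>(2)]] .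
  then have "inj_on (\<lambda>i. c {rev vs ! i, rev vs ! ((i + 1) mod n)}) {..<n}"
    using flip by (simp add: inj_on_def)
  with vs show ?thesis
    by (simp add: rainbow_cycle_def)
qed

locale no_short_rainbow =
  fixes c :: "'v set \<Rightarrow> 'c" and q :: nat
  assumes q_pos: "1 \<le> q" and no_rainbow: "\<not> has_rainbow_cycle c (2*q+3)"
begin

abbreviation rainbow :: "'v list \<Rightarrow> bool" where
  "rainbow W \<equiv> rainbow_cycle c (6*q+3) W"

definition vtx :: "'v list \<Rightarrow> nat \<Rightarrow> 'v" where
  "vtx W p = W ! (p mod (6*q+3))"

definition chord_col :: "'v list \<Rightarrow> nat \<Rightarrow> nat \<Rightarrow> 'c" where
  "chord_col W a b = c {vtx W a, vtx W b}"

definition arc_col :: "'v list \<Rightarrow> nat \<Rightarrow> 'c" where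
  "arc_col W p = chord_col W p (Suc p)"

lemma chord_col_commute: "chord_col W a b = chord_col W b a"
  by (simp add: chord_col_def insert_commute)

lemma arc_col_inj:
  assumes "rainbow W" "arc_col W a = arc_col W b" "a < 6*q+3" "b < 6*q+3"
  shows "a = b"
proof -
  have "inj_on (\<lambda>i. c {W ! i, W ! ((i + 1) mod (6*q+3))}) {..<6*q+3}"
    using assms(1) by (simp add: rainbow_cycle_def)
  moreover have "arc_col W p = c {W ! p, W ! ((p + 1) mod (6*q+3))}" if "p < 6*q+3" for p
    using that by (simp add: arc_col_def chord_col_def vtx_def mod_Suc_eq)
  ultimately show ?thesis
    using assms(2-4) by (auto simp: inj_on_def)
qed

definition is_cycle :: "(nat \<Rightarrow> nat) \<Rightarrow> bool" where
  "is_cycle g \<longleftrightarrow> (\<forall>i<2*q+3. g i < 6*q+3) \<and> inj_on g {..<2*q+3} \<and> g (2*q+3) = g 0"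

definition cycle_col :: "'v list \<Rightarrow> (nat \<Rightarrow> nat) \<Rightarrow> nat \<Rightarrow> 'c" where
  "cycle_col W g i = chord_col W (g i) (g (Suc i))"

lemma cycle_col_arcI:
  assumes "g (Suc i) = Suc (g i) \<and> p = g i \<or> g i = Suc (g (Suc i)) \<and> p = g (Suc i)
    \<or> g i = 6*q+2 \<and> g (Suc i) = 0 \<and> p = 6*q+2 \<or> g i = 0 \<and> g (Suc i) = 6*q+2 \<and> p = 6*q+2"
  shows "cycle_col W g i = arc_col W p"
proof -
  have "Suc (6*q+2) = 6*q+3" by simp
  then have wrap: "chord_col W a (Suc (6*q+2)) = chord_col W a 0" for a
    by (simp only: chord_col_def vtx_def mod_self mod_0)
  from assms show ?thesis
    unfolding cycle_col_def arc_col_def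
    by (elim disjE conjE) (simp_all only: wrap chord_col_commute)
qed

lemma cycle_col_eq_chord_col:
  "g i = a \<and> g (Suc i) = b \<or> g i = b \<and> g (Suc i) = a \<Longrightarrow> cycle_col W g i = chord_col W a b"
  by (auto simp: cycle_col_def chord_col_commute)

lemma chord_of_cycle_repeats_color:
  assumes "rainbow W" "is_cycle g"
    and arcs: "\<forall>i<2*q+3. i \<notin> C \<longrightarrow> cycle_col W g i = arc_col W (\<phi> i) \<and> \<phi> i < 6*q+3"
    and "inj_on \<phi> ({..<2*q+3} - C)"
  shows "\<exists>i\<in>C. i < 2*q+3 \<and> (\<exists>j<2*q+3. j \<noteq> i \<and> cycle_col W g i = cycle_col W g j)"
proof -
  let ?n = "2*q+3"
  define vs where "vs = map (\<lambda>i. vtx W (g i)) [0..<?n]"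
  have W: "length W = 6*q+3" "distinct W"
    using assms(1) by (auto simp: rainbow_cycle_def)
  have g: "\<forall>i<?n. g i < 6*q+3" "inj_on g {..<?n}" "g ?n = g 0"
    using assms(2) by (auto simp: is_cycle_def)
  have "distinct vs"
    unfolding distinct_conv_nth
    using W g by (simp add: vs_def vtx_def inj_on_def nth_eq_iff_index_eq) (metis lessThan_iff)
  have next_vtx: "vs ! ((i + 1) mod ?n) = vtx W (g (Suc i))" if "i < ?n" for i
  proof (cases "Suc i = ?n")
    case True
    then have "(i + 1) mod ?n = 0" "g (Suc i) = g 0"
      using g(3) by (simp_all only: Suc_eq_plus1 mod_self)
    then show ?thesis by (simp add: vs_def)
  next
    case False
    then show ?thesis using that by (simp add: vs_def)
  qed
  have edge: "c {vs ! i, vs ! ((i + 1) mod ?n)} = cycle_col W g i" if "i < ?n" for i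
    using that next_vtx by (simp add: vs_def cycle_col_def chord_col_def)
  have "inj_on (cycle_col W g) ({..<?n} - C)"
    using arcs assms(4) arc_col_inj[OF assms(1)] by (auto simp: inj_on_def)
  then have "inj_on (\<lambda>i. c {vs ! i, vs ! ((i + 1) mod ?n)}) ({..<?n} - C)"
    using edge by (simp add: inj_on_def)
  moreover have "length vs = ?n" by (simp add: vs_def)
  ultimately obtain i j where "i \<in> C" "i < ?n" "j < ?n" "j \<noteq> i"
      "c {vs ! i, vs ! ((i + 1) mod ?n)} = c {vs ! j, vs ! ((j + 1) mod ?n)}"
    using not_rainbow_chord_repeats_color[OF no_rainbow] \<open>distinct vs\<close> by fastforce
  then show ?thesis using edge[of i] edge[of j] by auto
qed

lemma chord_col_in_cycle_arcs:
  assumes "rainbow W" "is_cycle g" "k < 2*q+3"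
    and "\<forall>i<2*q+3. i \<noteq> k \<longrightarrow> cycle_col W g i = arc_col W (\<phi> i) \<and> \<phi> i < 6*q+3"
    and "inj_on \<phi> ({..<2*q+3} - {k})"
  shows "cycle_col W g k \<in> arc_col W ` \<phi> ` ({..<2*q+3} - {k})"
  using chord_of_cycle_repeats_color[of W g "{k}" \<phi>] assms by auto

lemma chord_cols_in_cycle_arcs:
  assumes "rainbow W" "is_cycle g" "k < 2*q+3" "l < 2*q+3" "k \<noteq> l"
    and arcs: "\<forall>i<2*q+3. i \<notin> {k, l} \<longrightarrow> cycle_col W g i = arc_col W (\<phi> i) \<and> \<phi> i < 6*q+3"
    and "inj_on \<phi> ({..<2*q+3} - {k, l})"
    and a: "cycle_col W g k = arc_col W a" "a < 6*q+3"
    and b: "cycle_col W g l = arc_col W b" "b < 6*q+3"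
  shows "a = b \<or> a \<in> \<phi> ` ({..<2*q+3} - {k, l}) \<or> b \<in> \<phi> ` ({..<2*q+3} - {k, l})"
proof -
  obtain i j where ij: "i \<in> {k, l}" "j < 2*q+3" "j \<noteq> i" "cycle_col W g i = cycle_col W g j"
    using chord_of_cycle_repeats_color[OF assms(1,2) arcs assms(7)] by blast
  show ?thesis
  proof (cases "j \<in> {k, l}")
    case True
    with ij a b have "arc_col W a = arc_col W b" by auto
    then show ?thesis using a b arc_col_inj[OF assms(1)] by blast
  next
    case False
    with ij arcs a b have "arc_col W (\<phi> j) \<in> {arc_col W a, arc_col W b}" "\<phi> j < 6*q+3" by auto
    then have "\<phi> j \<in> {a, b}" using a b arc_col_inj[OF assms(1)] by blast
    then show ?thesis using False \<open>j < 2*q+3\<close> by blast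
  qed
qed

definition wrap_eq :: "nat \<Rightarrow> nat \<Rightarrow> bool" where
  "wrap_eq x y \<longleftrightarrow> x = y \<or> x + (6*q+3) = y"

lemma vtx_wrap_eq: "wrap_eq x y \<Longrightarrow> vtx W x = vtx W y"
  by (auto simp: wrap_eq_def vtx_def)

lemma vtx_rotate: "length W = 6*q+3 \<Longrightarrow> vtx (rotate r W) p = vtx W (p + r)"
  by (simp add: vtx_def nth_rotate mod_simps add.commute)

lemma chord_col_rotate:
  "length W = 6*q+3 \<Longrightarrow> wrap_eq a' (a + r) \<Longrightarrow> wrap_eq b' (b + r) \<Longrightarrow>
    chord_col (rotate r W) a b = chord_col W a' b'"
  by (simp add: chord_col_def vtx_rotate vtx_wrap_eq)

lemma arc_col_rotate:
  "length W = 6*q+3 \<Longrightarrow> wrap_eq p' (p + r) \<Longrightarrow> arc_col (rotate r W) p = arc_col W p'"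
  unfolding arc_col_def by (rule chord_col_rotate) (auto simp: wrap_eq_def)

(* The reflection p \<mapsto> 2q+2 - p: it exchanges the first and the last arc spanned by each of the
   chords {0, 2q+2}, {2q+1, 4q+3}, {4q+2, 1}. *)
definition mirror :: "'v list \<Rightarrow> 'v list" where
  "mirror W = rev (rotate (2*q+3) W)"

lemma vtx_mirror:
  assumes "length W = 6*q+3" "x < 6*q+3"
  shows "vtx (mirror W) x = vtx W (8*q+5 - x)"
proof -
  have "vtx (mirror W) x = rotate (2*q+3) W ! (6*q+2 - x)"
    using assms by (simp add: mirror_def vtx_def rev_nth)
  also have "\<dots> = vtx W (8*q+5 - x)"
    using assms by (simp add: nth_rotate vtx_def add.commute)
  finally show ?thesis .
qed

lemma chord_col_mirror:
  "length W = 6*q+3 \<Longrightarrow> a < 6*q+3 \<Longrightarrow> b < 6*q+3 \<Longrightarrow> wrap_eq a' (8*q+5 - a) \<Longrightarrow>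
    wrap_eq b' (8*q+5 - b) \<Longrightarrow> chord_col (mirror W) a b = chord_col W a' b'"
  by (simp add: chord_col_def vtx_mirror vtx_wrap_eq)

lemma arc_col_mirror:
  "length W = 6*q+3 \<Longrightarrow> Suc p < 6*q+3 \<Longrightarrow> wrap_eq p' (8*q+4 - p) \<Longrightarrow>
    arc_col (mirror W) p = arc_col W p'"
  unfolding arc_col_def by (subst chord_col_commute, rule chord_col_mirror) (auto simp: wrap_eq_def)

(* In each of the following lemmas g lists the positions of an n-cycle that walks along arcs of W
   and uses one or two chords, and \<phi> i is the arc traversed by its i-th edge. The names list the
   ends of the chords, 3q2 standing for position 3q+2 and so on. *)

lemma chord_0_2q2_arc:
  assumes "rainbow W"
  shows "chord_col W 0 (2*q+2) \<in> arc_col W ` {..2*q+1}"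
proof -
  define g where "g i = (if i \<le> 2*q+2 then i else 0)" for i
  define \<phi> :: "nat \<Rightarrow> nat" where "\<phi> i = i" for i
  have "cycle_col W g (2*q+2) \<in> arc_col W ` \<phi> ` ({..<2*q+3} - {2*q+2})"
  proof (rule chord_col_in_cycle_arcs[OF assms(1)])
    show "is_cycle g"
      using q_pos by (auto simp: is_cycle_def g_def inj_on_def)
    show "\<forall>i<2*q+3. i \<noteq> 2*q+2 \<longrightarrow> cycle_col W g i = arc_col W (\<phi> i) \<and> \<phi> i < 6*q+3"
      using q_pos by (intro allI impI conjI cycle_col_arcI; auto simp: g_def \<phi>_def)
    show "inj_on \<phi> ({..<2*q+3} - {2*q+2})"
      using q_pos by (auto simp: inj_on_def \<phi>_def)
  qed simp
  moreover have "\<phi> ` ({..<2*q+3} - {2*q+2}) \<subseteq> {..2*q+1}"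
    by (auto simp: \<phi>_def)
  moreover have "cycle_col W g (2*q+2) = chord_col W 0 (2*q+2)"
    by (rule cycle_col_eq_chord_col) (use q_pos in \<open>auto simp: g_def\<close>)
  ultimately show ?thesis
    by auto
qed

lemma chords_0_2q2_2q1_4q3:
  assumes "rainbow W"
    and a: "chord_col W 0 (2*q+2) = arc_col W a" "a < 6*q+3"
    and b: "chord_col W (2*q+1) (4*q+3) = arc_col W b" "b < 6*q+3"
  shows "a = b \<or> a \<in> {2*q+1} \<union> {4*q+3..6*q+2} \<or> b \<in> {2*q+1} \<union> {4*q+3..6*q+2}"
proof -
  define g where "g i = (if i = 0 then 0 else if i = 1 then 2*q+2 else if i = 2 then 2*q+1
    else if i \<le> 2*q+2 then 4*q+i else 0)" for i
  define \<phi> where "\<phi> i = (if i = 1 then 2*q+1 else 4*q+i)" for i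
  have "a = b \<or> a \<in> \<phi> ` ({..<2*q+3} - {0, 2}) \<or> b \<in> \<phi> ` ({..<2*q+3} - {0, 2})"
  proof (rule chord_cols_in_cycle_arcs[OF assms(1)])
    show "is_cycle g"
      using q_pos by (auto simp: is_cycle_def g_def inj_on_def)
    show "\<forall>i<2*q+3. i \<notin> {0, 2} \<longrightarrow> cycle_col W g i = arc_col W (\<phi> i) \<and> \<phi> i < 6*q+3"
      using q_pos by (intro allI impI conjI cycle_col_arcI; auto simp: g_def \<phi>_def)
    show "inj_on \<phi> ({..<2*q+3} - {0, 2})"
      using q_pos by (auto simp: inj_on_def \<phi>_def)
    show "cycle_col W g 0 = arc_col W a"
      unfolding a(1)[symmetric] by (rule cycle_col_eq_chord_col) (use q_pos in \<open>auto simp: g_def\<close>)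
    show "cycle_col W g 2 = arc_col W b"
      unfolding b(1)[symmetric] by (rule cycle_col_eq_chord_col) (use q_pos in \<open>auto simp: g_def\<close>)
  qed (use a b in auto)
  then show ?thesis
    by (auto simp: \<phi>_def)
qed

lemma chord_1_4q2_arc:
  assumes "rainbow W"
  shows "chord_col W 1 (4*q+2) \<in> arc_col W ` ({0} \<union> {4*q+2..6*q+2})"
proof -
  define g where "g i = (if i \<le> 1 then i else if i \<le> 2*q+2 then 4*q+i else 0)" for i
  define \<phi> where "\<phi> i = (if i = 0 then 0 else 4*q+i)" for i
  have "cycle_col W g 1 \<in> arc_col W ` \<phi> ` ({..<2*q+3} - {1})"
  proof (rule chord_col_in_cycle_arcs[OF assms(1)])
    show "is_cycle g"
      using q_pos by (auto simp: is_cycle_def g_def inj_on_def)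
    show "\<forall>i<2*q+3. i \<noteq> 1 \<longrightarrow> cycle_col W g i = arc_col W (\<phi> i) \<and> \<phi> i < 6*q+3"
      using q_pos by (intro allI impI conjI cycle_col_arcI; auto simp: g_def \<phi>_def)
    show "inj_on \<phi> ({..<2*q+3} - {1})"
      using q_pos by (auto simp: inj_on_def \<phi>_def)
  qed simp
  moreover have "\<phi> ` ({..<2*q+3} - {1}) \<subseteq> {0} \<union> {4*q+2..6*q+2}"
    by (auto simp: \<phi>_def)
  moreover have "cycle_col W g 1 = chord_col W 1 (4*q+2)"
    by (rule cycle_col_eq_chord_col) (use q_pos in \<open>auto simp: g_def\<close>)
  ultimately show ?thesis
    by auto
qed

lemma chords_1_4q2_2q1_4q3:
  assumes "rainbow W"
    and a: "chord_col W 1 (4*q+2) = arc_col W a" "a < 6*q+3"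
    and b: "chord_col W (2*q+1) (4*q+3) = arc_col W b" "b < 6*q+3"
  shows "a = b \<or> a \<in> {1..2*q} \<union> {4*q+2} \<or> b \<in> {1..2*q} \<union> {4*q+2}"
proof -
  define g where "g i = (if i \<le> 2*q then i+1 else if i = 2*q+1 then 4*q+3
    else if i = 2*q+2 then 4*q+2 else 1)" for i
  define \<phi> where "\<phi> i = (if i < 2*q then i+1 else 4*q+2)" for i
  have "a = b \<or> a \<in> \<phi> ` ({..<2*q+3} - {2*q+2, 2*q}) \<or> b \<in> \<phi> ` ({..<2*q+3} - {2*q+2, 2*q})"
  proof (rule chord_cols_in_cycle_arcs[OF assms(1)])
    show "is_cycle g"
      using q_pos by (auto simp: is_cycle_def g_def inj_on_def)
    show "\<forall>i<2*q+3. i \<notin> {2*q+2, 2*q} \<longrightarrow> cycle_col W g i = arc_col W (\<phi> i) \<and> \<phi> i < 6*q+3"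
      using q_pos by (intro allI impI conjI cycle_col_arcI; auto simp: g_def \<phi>_def)
    show "inj_on \<phi> ({..<2*q+3} - {2*q+2, 2*q})"
      using q_pos by (auto simp: inj_on_def \<phi>_def)
    show "cycle_col W g (2*q+2) = arc_col W a"
      unfolding a(1)[symmetric] by (rule cycle_col_eq_chord_col) (use q_pos in \<open>auto simp: g_def\<close>)
    show "cycle_col W g (2*q) = arc_col W b"
      unfolding b(1)[symmetric] by (rule cycle_col_eq_chord_col) (use q_pos in \<open>auto simp: g_def\<close>)
  qed (use a b in auto)
  then show ?thesis
    by (auto simp: \<phi>_def)
qed

lemma chords_1_4q2_0_2q2:
  assumes "rainbow W"
    and a: "chord_col W 1 (4*q+2) = arc_col W a" "a < 6*q+3"
    and b: "chord_col W 0 (2*q+2) = arc_col W b" "b < 6*q+3"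
  shows "a = b \<or> a \<in> {0} \<union> {2*q+2..4*q+1} \<or> b \<in> {0} \<union> {2*q+2..4*q+1}"
proof -
  define g where "g i = (if i \<le> 1 then i else if i \<le> 2*q+2 then 4*q+4-i else 0)" for i
  define \<phi> where "\<phi> i = (if i = 0 then 0 else 4*q+3-i)" for i
  have "a = b \<or> a \<in> \<phi> ` ({..<2*q+3} - {1, 2*q+2}) \<or> b \<in> \<phi> ` ({..<2*q+3} - {1, 2*q+2})"
  proof (rule chord_cols_in_cycle_arcs[OF assms(1)])
    show "is_cycle g"
      using q_pos by (auto simp: is_cycle_def g_def inj_on_def)
    show "\<forall>i<2*q+3. i \<notin> {1, 2*q+2} \<longrightarrow> cycle_col W g i = arc_col W (\<phi> i) \<and> \<phi> i < 6*q+3"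
      using q_pos by (intro allI impI conjI cycle_col_arcI; auto simp: g_def \<phi>_def)
    show "inj_on \<phi> ({..<2*q+3} - {1, 2*q+2})"
      using q_pos by (auto simp: inj_on_def \<phi>_def)
    show "cycle_col W g 1 = arc_col W a"
      unfolding a(1)[symmetric] by (rule cycle_col_eq_chord_col) (use q_pos in \<open>auto simp: g_def\<close>)
    show "cycle_col W g (2*q+2) = arc_col W b"
      unfolding b(1)[symmetric] by (rule cycle_col_eq_chord_col) (use q_pos in \<open>auto simp: g_def\<close>)
  qed (use a b in auto)
  then show ?thesis
    by (auto simp: \<phi>_def)
qed

lemma span_chord_end_arc:
  assumes "rainbow W"
  shows "chord_col W 0 (2*q+2) = arc_col W 0 \<or> chord_col W 0 (2*q+2) = arc_col W (2*q+1)"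
proof -
  have len: "length W = 6*q+3"
    using assms by (simp add: rainbow_cycle_def)
  obtain a where a: "a \<le> 2*q+1" "chord_col W 0 (2*q+2) = arc_col W a"
    using chord_0_2q2_arc[OF assms] by auto
  obtain b where b: "b \<le> 2*q+1" "chord_col W (2*q+1) (4*q+3) = arc_col W (b + (2*q+1))"
  proof -
    obtain b where "b \<le> 2*q+1"
        "chord_col (rotate (2*q+1) W) 0 (2*q+2) = arc_col (rotate (2*q+1) W) b"
      using chord_0_2q2_arc[OF rainbow_cycle_rotate[OF assms]] by (auto simp del: rotate_Suc)
    moreover have "chord_col (rotate (2*q+1) W) 0 (2*q+2) = chord_col W (2*q+1) (4*q+3)"
      by (rule chord_col_rotate) (simp_all add: len wrap_eq_def)
    moreover have "arc_col (rotate (2*q+1) W) b = arc_col W (b + (2*q+1))"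
      by (rule arc_col_rotate) (simp_all add: len wrap_eq_def)
    ultimately show ?thesis
      using that by (simp del: rotate_Suc)
  qed
  obtain d where d: "d \<in> {0} \<union> {4*q+2..6*q+2}" "chord_col W 1 (4*q+2) = arc_col W d"
    using chord_1_4q2_arc[OF assms] by blast
  have "a = b + (2*q+1) \<or> a \<in> {2*q+1} \<union> {4*q+3..6*q+2} \<or> b + (2*q+1) \<in> {2*q+1} \<union> {4*q+3..6*q+2}"
    using chords_0_2q2_2q1_4q3[OF assms a(2) _ b(2)] a(1) b(1) by auto
  moreover have "d = b + (2*q+1) \<or> d \<in> {1..2*q} \<union> {4*q+2} \<or> b + (2*q+1) \<in> {1..2*q} \<union> {4*q+2}"
    using chords_1_4q2_2q1_4q3[OF assms d(2) _ b(2)] d(1) b(1) by auto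
  moreover have "d = a \<or> d \<in> {0} \<union> {2*q+2..4*q+1} \<or> a \<in> {0} \<union> {2*q+2..4*q+1}"
    using chords_1_4q2_0_2q2[OF assms d(2) _ a(2)] d(1) a(1) by auto
  ultimately have "a = 0 \<or> a = 2*q+1"
    using a(1) b(1) d(1) by auto
  with a(2) show ?thesis by auto
qed

lemma span_chord_end_arc_rotated:
  assumes "rainbow W" "wrap_eq b (a + (2*q+2))" "wrap_eq a' (a + (2*q+1))"
  shows "chord_col W a b = arc_col W a \<or> chord_col W a b = arc_col W a'"
proof -
  have len: "length W = 6*q+3"
    using assms(1) by (simp add: rainbow_cycle_def)
  have "chord_col (rotate a W) 0 (2*q+2) = chord_col W a b"
    by (rule chord_col_rotate) (use len assms(2) in \<open>auto simp: wrap_eq_def\<close>)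
  moreover have "arc_col (rotate a W) 0 = arc_col W a"
    by (rule arc_col_rotate) (simp_all add: len wrap_eq_def)
  moreover have "arc_col (rotate a W) (2*q+1) = arc_col W a'"
    by (rule arc_col_rotate) (use len assms(3) in \<open>auto simp: wrap_eq_def\<close>)
  ultimately show ?thesis
    using span_chord_end_arc[OF rainbow_cycle_rotate[OF assms(1)]] by metis
qed

lemma adjacent_span_chords:
  assumes "rainbow W"
  shows "chord_col W 0 (2*q+2) = arc_col W (2*q+1)
    \<or> chord_col W (2*q+1) (4*q+3) = arc_col W (2*q+1)"
proof -
  have a: "chord_col W 0 (2*q+2) \<in> arc_col W ` {0, 2*q+1}"
    using span_chord_end_arc[OF assms] by auto
  have b: "chord_col W (2*q+1) (4*q+3) \<in> arc_col W ` {2*q+1, 4*q+2}"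
    using span_chord_end_arc_rotated[OF assms, of "4*q+3" "2*q+1" "4*q+2"]
    by (auto simp: wrap_eq_def)
  from a b obtain x y where xy: "x \<in> {0, 2*q+1}" "y \<in> {2*q+1, 4*q+2}"
      "chord_col W 0 (2*q+2) = arc_col W x" "chord_col W (2*q+1) (4*q+3) = arc_col W y"
    by blast
  moreover have "x = y \<or> x \<in> {2*q+1} \<union> {4*q+3..6*q+2} \<or> y \<in> {2*q+1} \<union> {4*q+3..6*q+2}"
    using chords_0_2q2_2q1_4q3[OF assms xy(3) _ xy(4)] xy(1,2) by auto
  ultimately show ?thesis
    by auto
qed

lemma adjacent_span_chords_rotated:
  assumes "rainbow W" "wrap_eq b (a + (2*q+2))" "wrap_eq a' (a + (2*q+1))" "wrap_eq d (a + (4*q+3))"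
  shows "chord_col W a b = arc_col W a' \<or> chord_col W a' d = arc_col W a'"
proof -
  have len: "length W = 6*q+3"
    using assms(1) by (simp add: rainbow_cycle_def)
  have "chord_col (rotate a W) 0 (2*q+2) = chord_col W a b"
    by (rule chord_col_rotate) (use len assms(2) in \<open>auto simp: wrap_eq_def\<close>)
  moreover have "chord_col (rotate a W) (2*q+1) (4*q+3) = chord_col W a' d"
    by (rule chord_col_rotate) (use len assms(3,4) in \<open>auto simp: wrap_eq_def\<close>)
  moreover have "arc_col (rotate a W) (2*q+1) = arc_col W a'"
    by (rule arc_col_rotate) (use len assms(3) in \<open>auto simp: wrap_eq_def\<close>)
  ultimately show ?thesis
    using adjacent_span_chords[OF rainbow_cycle_rotate[OF assms(1)]] by metis
qed

lemma span_chords_orientation: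
  assumes "rainbow W"
  shows "chord_col W 0 (2*q+2) = arc_col W 0 \<and> chord_col W (2*q+1) (4*q+3) = arc_col W (2*q+1)
      \<and> chord_col W (4*q+2) 1 = arc_col W (4*q+2)
    \<or> chord_col W 0 (2*q+2) = arc_col W (2*q+1) \<and> chord_col W (2*q+1) (4*q+3) = arc_col W (4*q+2)
      \<and> chord_col W (4*q+2) 1 = arc_col W 0"
proof -
  have "arc_col W 0 \<noteq> arc_col W (2*q+1)" "arc_col W (2*q+1) \<noteq> arc_col W (4*q+2)"
      "arc_col W (4*q+2) \<noteq> arc_col W 0"
    using arc_col_inj[OF assms, of 0 "2*q+1"] arc_col_inj[OF assms, of "2*q+1" "4*q+2"]
      arc_col_inj[OF assms, of "4*q+2" 0] by auto
  moreover have "chord_col W 0 (2*q+2) = arc_col W 0 \<or> chord_col W 0 (2*q+2) = arc_col W (2*q+1)"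
    using span_chord_end_arc[OF assms] .
  moreover have "chord_col W (2*q+1) (4*q+3) = arc_col W (2*q+1)
      \<or> chord_col W (2*q+1) (4*q+3) = arc_col W (4*q+2)"
    by (rule span_chord_end_arc_rotated[OF assms]) (simp_all add: wrap_eq_def)
  moreover have "chord_col W (4*q+2) 1 = arc_col W (4*q+2) \<or> chord_col W (4*q+2) 1 = arc_col W 0"
    by (rule span_chord_end_arc_rotated[OF assms]) (simp_all add: wrap_eq_def)
  moreover have "chord_col W 0 (2*q+2) = arc_col W (2*q+1)
      \<or> chord_col W (2*q+1) (4*q+3) = arc_col W (2*q+1)"
    using adjacent_span_chords[OF assms] .
  moreover have "chord_col W (2*q+1) (4*q+3) = arc_col W (4*q+2)
      \<or> chord_col W (4*q+2) 1 = arc_col W (4*q+2)"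
    by (rule adjacent_span_chords_rotated[OF assms]) (simp_all add: wrap_eq_def)
  moreover have "chord_col W (4*q+2) 1 = arc_col W 0 \<or> chord_col W 0 (2*q+2) = arc_col W 0"
    by (rule adjacent_span_chords_rotated[OF assms]) (simp_all add: wrap_eq_def)
  ultimately show ?thesis
    by argo
qed

lemma chords_3q2_5q3_q1_5q3:
  assumes "rainbow W"
    and a: "chord_col W (3*q+2) (5*q+3) = arc_col W a" "a < 6*q+3"
    and b: "chord_col W (q+1) (5*q+3) = arc_col W b" "b < 6*q+3"
  shows "a = b \<or> a \<in> {q+1..3*q+1} \<or> b \<in> {q+1..3*q+1}"
proof -
  define g where "g i = (if i \<le> 2*q+1 then q+1+i else if i = 2*q+2 then 5*q+3 else q+1)" for i
  define \<phi> where "\<phi> i = q+1+i" for i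
  have "a = b \<or> a \<in> \<phi> ` ({..<2*q+3} - {2*q+1, 2*q+2}) \<or> b \<in> \<phi> ` ({..<2*q+3} - {2*q+1, 2*q+2})"
  proof (rule chord_cols_in_cycle_arcs[OF assms(1)])
    show "is_cycle g"
      using q_pos by (auto simp: is_cycle_def g_def inj_on_def)
    show "\<forall>i<2*q+3. i \<notin> {2*q+1, 2*q+2} \<longrightarrow> cycle_col W g i = arc_col W (\<phi> i) \<and> \<phi> i < 6*q+3"
      using q_pos by (intro allI impI conjI cycle_col_arcI; auto simp: g_def \<phi>_def)
    show "inj_on \<phi> ({..<2*q+3} - {2*q+1, 2*q+2})"
      using q_pos by (auto simp: inj_on_def \<phi>_def)
    show "cycle_col W g (2*q+1) = arc_col W a"
      unfolding a(1)[symmetric] by (rule cycle_col_eq_chord_col) (use q_pos in \<open>auto simp: g_def\<close>)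
    show "cycle_col W g (2*q+2) = arc_col W b"
      unfolding b(1)[symmetric] by (rule cycle_col_eq_chord_col) (use q_pos in \<open>auto simp: g_def\<close>)
  qed (use a b in auto)
  then show ?thesis
    by (auto simp: \<phi>_def)
qed

lemma chords_q1_5q3_q1_3q2:
  assumes "rainbow W"
    and a: "chord_col W (q+1) (5*q+3) = arc_col W a" "a < 6*q+3"
    and b: "chord_col W (q+1) (3*q+2) = arc_col W b" "b < 6*q+3"
  shows "a = b \<or> a \<in> {3*q+2..5*q+2} \<or> b \<in> {3*q+2..5*q+2}"
proof -
  define g where "g i = (if i \<le> 2*q+1 then 3*q+2+i else if i = 2*q+2 then q+1 else 3*q+2)" for i
  define \<phi> where "\<phi> i = 3*q+2+i" for i
  have "a = b \<or> a \<in> \<phi> ` ({..<2*q+3} - {2*q+1, 2*q+2}) \<or> b \<in> \<phi> ` ({..<2*q+3} - {2*q+1, 2*q+2})"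
  proof (rule chord_cols_in_cycle_arcs[OF assms(1)])
    show "is_cycle g"
      using q_pos by (auto simp: is_cycle_def g_def inj_on_def)
    show "\<forall>i<2*q+3. i \<notin> {2*q+1, 2*q+2} \<longrightarrow> cycle_col W g i = arc_col W (\<phi> i) \<and> \<phi> i < 6*q+3"
      using q_pos by (intro allI impI conjI cycle_col_arcI; auto simp: g_def \<phi>_def)
    show "inj_on \<phi> ({..<2*q+3} - {2*q+1, 2*q+2})"
      using q_pos by (auto simp: inj_on_def \<phi>_def)
    show "cycle_col W g (2*q+1) = arc_col W a"
      unfolding a(1)[symmetric] by (rule cycle_col_eq_chord_col) (use q_pos in \<open>auto simp: g_def\<close>)
    show "cycle_col W g (2*q+2) = arc_col W b"
      unfolding b(1)[symmetric] by (rule cycle_col_eq_chord_col) (use q_pos in \<open>auto simp: g_def\<close>)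
  qed (use a b in auto)
  then show ?thesis
    by (auto simp: \<phi>_def)
qed

lemma chords_q1_3q2_3q2_5q3:
  assumes "rainbow W"
    and a: "chord_col W (q+1) (3*q+2) = arc_col W a" "a < 6*q+3"
    and b: "chord_col W (3*q+2) (5*q+3) = arc_col W b" "b < 6*q+3"
  shows "a = b \<or> a \<in> {..q} \<union> {5*q+3..6*q+2} \<or> b \<in> {..q} \<union> {5*q+3..6*q+2}"
proof -
  define g where "g i = (if i < q then 5*q+3+i else if i \<le> 2*q+1 then i - q
    else if i = 2*q+2 then 3*q+2 else 5*q+3)" for i
  define \<phi> where "\<phi> i = (if i < q then 5*q+3+i else i - q)" for i
  have "a = b \<or> a \<in> \<phi> ` ({..<2*q+3} - {2*q+1, 2*q+2}) \<or> b \<in> \<phi> ` ({..<2*q+3} - {2*q+1, 2*q+2})"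
  proof (rule chord_cols_in_cycle_arcs[OF assms(1)])
    show "is_cycle g"
      using q_pos by (auto simp: is_cycle_def g_def inj_on_def)
    show "\<forall>i<2*q+3. i \<notin> {2*q+1, 2*q+2} \<longrightarrow> cycle_col W g i = arc_col W (\<phi> i) \<and> \<phi> i < 6*q+3"
      using q_pos by (intro allI impI conjI cycle_col_arcI; auto simp: g_def \<phi>_def)
    show "inj_on \<phi> ({..<2*q+3} - {2*q+1, 2*q+2})"
      using q_pos by (auto simp: inj_on_def \<phi>_def)
    show "cycle_col W g (2*q+1) = arc_col W a"
      unfolding a(1)[symmetric] by (rule cycle_col_eq_chord_col) (use q_pos in \<open>auto simp: g_def\<close>)
    show "cycle_col W g (2*q+2) = arc_col W b"
      unfolding b(1)[symmetric] by (rule cycle_col_eq_chord_col) (use q_pos in \<open>auto simp: g_def\<close>)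
  qed (use a b in auto)
  then show ?thesis
    by (auto simp: \<phi>_def)
qed

lemma chords_q1_5q3_3q2_5q3_given_4q2_1:
  assumes "rainbow W"
    and known: "chord_col W (4*q+2) 1 = arc_col W (4*q+2)"
    and a: "chord_col W (q+1) (5*q+3) = arc_col W a" "a < 6*q+3"
    and b: "chord_col W (3*q+2) (5*q+3) = arc_col W b" "b < 6*q+3"
  shows "a = b \<or> a \<in> {1..q} \<union> {3*q+2..4*q+2} \<or> b \<in> {1..q} \<union> {3*q+2..4*q+2}"
proof -
  define g where "g i = (if i \<le> q then 3*q+2+i else if i \<le> 2*q+1 then i - q
    else if i = 2*q+2 then 5*q+3 else 3*q+2)" for i
  define \<phi> where "\<phi> i = (if i \<le> q then 3*q+2+i else i - q)" for i
  have "a = b \<or> a \<in> \<phi> ` ({..<2*q+3} - {2*q+1, 2*q+2}) \<or> b \<in> \<phi> ` ({..<2*q+3} - {2*q+1, 2*q+2})"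
  proof (rule chord_cols_in_cycle_arcs[OF assms(1)])
    show "is_cycle g"
      using q_pos by (auto simp: is_cycle_def g_def inj_on_def)
    show "\<forall>i<2*q+3. i \<notin> {2*q+1, 2*q+2} \<longrightarrow> cycle_col W g i = arc_col W (\<phi> i) \<and> \<phi> i < 6*q+3"
    proof (intro allI impI)
      fix i assume i: "i < 2*q+3" "i \<notin> {2*q+1, 2*q+2}"
      show "cycle_col W g i = arc_col W (\<phi> i) \<and> \<phi> i < 6*q+3"
      proof (cases "i = q")
        case True
        have "cycle_col W g i = chord_col W (4*q+2) 1"
          by (rule cycle_col_eq_chord_col) (use True q_pos in \<open>auto simp: g_def\<close>)
        moreover have "\<phi> i = 4*q+2"
          using True by (simp add: \<phi>_def)
        ultimately show ?thesis
          using known by simp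
      next
        case False
        with i show ?thesis
          using q_pos by (intro conjI cycle_col_arcI; auto simp: g_def \<phi>_def)
      qed
    qed
    show "inj_on \<phi> ({..<2*q+3} - {2*q+1, 2*q+2})"
      using q_pos by (auto simp: inj_on_def \<phi>_def)
    show "cycle_col W g (2*q+1) = arc_col W a"
      unfolding a(1)[symmetric] by (rule cycle_col_eq_chord_col) (use q_pos in \<open>auto simp: g_def\<close>)
    show "cycle_col W g (2*q+2) = arc_col W b"
      unfolding b(1)[symmetric] by (rule cycle_col_eq_chord_col) (use q_pos in \<open>auto simp: g_def\<close>)
  qed (use a b in auto)
  then show ?thesis
    by (auto simp: \<phi>_def)
qed

lemma chords_3q2_5q3_q1_3q2_given_2q1_4q3:
  assumes "rainbow W"
    and known: "chord_col W (2*q+1) (4*q+3) = arc_col W (2*q+1)"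
    and a: "chord_col W (3*q+2) (5*q+3) = arc_col W a" "a < 6*q+3"
    and b: "chord_col W (q+1) (3*q+2) = arc_col W b" "b < 6*q+3"
  shows "a = b \<or> a \<in> {q+1..2*q+1} \<union> {4*q+3..5*q+2} \<or> b \<in> {q+1..2*q+1} \<union> {4*q+3..5*q+2}"
proof -
  define g where "g i = (if i \<le> q then q+1+i else if i \<le> 2*q+1 then i+3*q+2
    else if i = 2*q+2 then 3*q+2 else q+1)" for i
  define \<phi> where "\<phi> i = (if i \<le> q then q+1+i else i+3*q+2)" for i
  have "a = b \<or> a \<in> \<phi> ` ({..<2*q+3} - {2*q+1, 2*q+2}) \<or> b \<in> \<phi> ` ({..<2*q+3} - {2*q+1, 2*q+2})"
  proof (rule chord_cols_in_cycle_arcs[OF assms(1)])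
    show "is_cycle g"
      using q_pos by (auto simp: is_cycle_def g_def inj_on_def)
    show "\<forall>i<2*q+3. i \<notin> {2*q+1, 2*q+2} \<longrightarrow> cycle_col W g i = arc_col W (\<phi> i) \<and> \<phi> i < 6*q+3"
    proof (intro allI impI)
      fix i assume i: "i < 2*q+3" "i \<notin> {2*q+1, 2*q+2}"
      show "cycle_col W g i = arc_col W (\<phi> i) \<and> \<phi> i < 6*q+3"
      proof (cases "i = q")
        case True
        have "cycle_col W g i = chord_col W (2*q+1) (4*q+3)"
          by (rule cycle_col_eq_chord_col) (use True q_pos in \<open>auto simp: g_def\<close>)
        moreover have "\<phi> i = 2*q+1"
          using True by (simp add: \<phi>_def)
        ultimately show ?thesis
          using known by simp
      next
        case False
        with i show ?thesis
          using q_pos by (intro conjI cycle_col_arcI; auto simp: g_def \<phi>_def)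
      qed
    qed
    show "inj_on \<phi> ({..<2*q+3} - {2*q+1, 2*q+2})"
      using q_pos by (auto simp: inj_on_def \<phi>_def)
    show "cycle_col W g (2*q+1) = arc_col W a"
      unfolding a(1)[symmetric] by (rule cycle_col_eq_chord_col) (use q_pos in \<open>auto simp: g_def\<close>)
    show "cycle_col W g (2*q+2) = arc_col W b"
      unfolding b(1)[symmetric] by (rule cycle_col_eq_chord_col) (use q_pos in \<open>auto simp: g_def\<close>)
  qed (use a b in auto)
  then show ?thesis
    by (auto simp: \<phi>_def)
qed

lemma chords_q1_3q2_q1_5q3_given_0_2q2:
  assumes "rainbow W"
    and known: "chord_col W 0 (2*q+2) = arc_col W 0"
    and a: "chord_col W (q+1) (3*q+2) = arc_col W a" "a < 6*q+3"
    and b: "chord_col W (q+1) (5*q+3) = arc_col W b" "b < 6*q+3"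
  shows "a = b \<or> a \<in> {0} \<union> {2*q+2..3*q+1} \<union> {5*q+3..6*q+2}
    \<or> b \<in> {0} \<union> {2*q+2..3*q+1} \<union> {5*q+3..6*q+2}"
proof -
  define g where "g i = (if i < q then 5*q+3+i else if i = q then 0 else if i \<le> 2*q+1 then i+q+1
    else if i = 2*q+2 then q+1 else 5*q+3)" for i
  define \<phi> where "\<phi> i = (if i < q then 5*q+3+i else if i = q then 0 else i+q+1)" for i
  have "a = b \<or> a \<in> \<phi> ` ({..<2*q+3} - {2*q+1, 2*q+2}) \<or> b \<in> \<phi> ` ({..<2*q+3} - {2*q+1, 2*q+2})"
  proof (rule chord_cols_in_cycle_arcs[OF assms(1)])
    show "is_cycle g"
      using q_pos by (auto simp: is_cycle_def g_def inj_on_def)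
    show "\<forall>i<2*q+3. i \<notin> {2*q+1, 2*q+2} \<longrightarrow> cycle_col W g i = arc_col W (\<phi> i) \<and> \<phi> i < 6*q+3"
    proof (intro allI impI)
      fix i assume i: "i < 2*q+3" "i \<notin> {2*q+1, 2*q+2}"
      show "cycle_col W g i = arc_col W (\<phi> i) \<and> \<phi> i < 6*q+3"
      proof (cases "i = q")
        case True
        have "cycle_col W g i = chord_col W 0 (2*q+2)"
          by (rule cycle_col_eq_chord_col) (use True q_pos in \<open>auto simp: g_def\<close>)
        moreover have "\<phi> i = 0"
          using True by (simp add: \<phi>_def)
        ultimately show ?thesis
          using known by simp
      next
        case False
        with i show ?thesis
          using q_pos by (intro conjI cycle_col_arcI; auto simp: g_def \<phi>_def)
      qed
    qed
    show "inj_on \<phi> ({..<2*q+3} - {2*q+1, 2*q+2})"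
      using q_pos by (auto simp: inj_on_def \<phi>_def)
    show "cycle_col W g (2*q+1) = arc_col W a"
      unfolding a(1)[symmetric] by (rule cycle_col_eq_chord_col) (use q_pos in \<open>auto simp: g_def\<close>)
    show "cycle_col W g (2*q+2) = arc_col W b"
      unfolding b(1)[symmetric] by (rule cycle_col_eq_chord_col) (use q_pos in \<open>auto simp: g_def\<close>)
  qed (use a b in auto)
  then show ?thesis
    by (auto simp: \<phi>_def)
qed

lemma chord_q1_3q2_given_2q1_4q3:
  assumes "rainbow W"
    and known: "chord_col W (2*q+1) (4*q+3) = arc_col W (2*q+1)"
  shows "chord_col W (q+1) (3*q+2) \<in> arc_col W ` ({q+1..2*q+1} \<union> {3*q+2..4*q+2})"
proof -
  define g where "g i = (if i \<le> q then q+1+i else if i \<le> 2*q+2 then 5*q+4-i else q+1)" for i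
  define \<phi> where "\<phi> i = (if i \<le> q then q+1+i else 5*q+3-i)" for i
  have "cycle_col W g (2*q+2) \<in> arc_col W ` \<phi> ` ({..<2*q+3} - {2*q+2})"
  proof (rule chord_col_in_cycle_arcs[OF assms(1)])
    show "is_cycle g"
      using q_pos by (auto simp: is_cycle_def g_def inj_on_def)
    show "\<forall>i<2*q+3. i \<noteq> 2*q+2 \<longrightarrow> cycle_col W g i = arc_col W (\<phi> i) \<and> \<phi> i < 6*q+3"
    proof (intro allI impI)
      fix i assume i: "i < 2*q+3" "i \<noteq> 2*q+2"
      show "cycle_col W g i = arc_col W (\<phi> i) \<and> \<phi> i < 6*q+3"
      proof (cases "i = q")
        case True
        have "cycle_col W g i = chord_col W (2*q+1) (4*q+3)"
          by (rule cycle_col_eq_chord_col) (use True q_pos in \<open>auto simp: g_def\<close>)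
        moreover have "\<phi> i = 2*q+1"
          using True by (simp add: \<phi>_def)
        ultimately show ?thesis
          using known by simp
      next
        case False
        with i show ?thesis
          using q_pos by (intro conjI cycle_col_arcI; auto simp: g_def \<phi>_def)
      qed
    qed
    show "inj_on \<phi> ({..<2*q+3} - {2*q+2})"
      using q_pos by (auto simp: inj_on_def \<phi>_def)
  qed simp
  moreover have "\<phi> ` ({..<2*q+3} - {2*q+2}) \<subseteq> {q+1..2*q+1} \<union> {3*q+2..4*q+2}"
    by (auto simp: \<phi>_def)
  moreover have "cycle_col W g (2*q+2) = chord_col W (q+1) (3*q+2)"
    by (rule cycle_col_eq_chord_col) (use q_pos in \<open>auto simp: g_def\<close>)
  ultimately show ?thesis
    by auto
qed

lemma chord_3q2_5q3_given_4q2_1: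
  assumes "rainbow W"
    and known: "chord_col W (4*q+2) 1 = arc_col W (4*q+2)"
  shows "chord_col W (3*q+2) (5*q+3) \<in> arc_col W ` ({0} \<union> {3*q+2..4*q+2} \<union> {5*q+3..6*q+2})"
proof -
  define g where "g i = (if i \<le> q then 3*q+2+i else if i = q+1 then 1 else if i = q+2 then 0
    else if i \<le> 2*q+2 then 7*q+5-i else 3*q+2)" for i
  define \<phi> where "\<phi> i = (if i \<le> q then 3*q+2+i else if i = q+1 then 0 else if i = q+2 then 6*q+2
    else 7*q+4-i)" for i
  have "cycle_col W g (2*q+2) \<in> arc_col W ` \<phi> ` ({..<2*q+3} - {2*q+2})"
  proof (rule chord_col_in_cycle_arcs[OF assms(1)])
    show "is_cycle g"
      using q_pos by (auto simp: is_cycle_def g_def inj_on_def)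
    show "\<forall>i<2*q+3. i \<noteq> 2*q+2 \<longrightarrow> cycle_col W g i = arc_col W (\<phi> i) \<and> \<phi> i < 6*q+3"
    proof (intro allI impI)
      fix i assume i: "i < 2*q+3" "i \<noteq> 2*q+2"
      show "cycle_col W g i = arc_col W (\<phi> i) \<and> \<phi> i < 6*q+3"
      proof (cases "i = q")
        case True
        have "cycle_col W g i = chord_col W (4*q+2) 1"
          by (rule cycle_col_eq_chord_col) (use True q_pos in \<open>auto simp: g_def\<close>)
        moreover have "\<phi> i = 4*q+2"
          using True by (simp add: \<phi>_def)
        ultimately show ?thesis
          using known by simp
      next
        case False
        with i show ?thesis
          using q_pos by (intro conjI cycle_col_arcI; auto simp: g_def \<phi>_def)
      qed
    qed
    show "inj_on \<phi> ({..<2*q+3} - {2*q+2})"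
      using q_pos by (auto simp: inj_on_def \<phi>_def)
  qed simp
  moreover have "\<phi> ` ({..<2*q+3} - {2*q+2}) \<subseteq> {0} \<union> {3*q+2..4*q+2} \<union> {5*q+3..6*q+2}"
    by (auto simp: \<phi>_def)
  moreover have "cycle_col W g (2*q+2) = chord_col W (3*q+2) (5*q+3)"
    by (rule cycle_col_eq_chord_col) (use q_pos in \<open>auto simp: g_def\<close>)
  ultimately show ?thesis
    by auto
qed

lemma chord_q1_5q3_given_0_2q2:
  assumes "rainbow W"
    and known: "chord_col W 0 (2*q+2) = arc_col W 0"
  shows "chord_col W (q+1) (5*q+3) \<in> arc_col W ` ({0} \<union> {q+1..2*q+1} \<union> {5*q+3..6*q+2})"
proof -
  define g where "g i = (if i < q then 5*q+3+i else if i = q then 0 else if i \<le> 2*q+2 then 3*q+3-i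
    else 5*q+3)" for i
  define \<phi> where "\<phi> i = (if i < q then 5*q+3+i else if i = q then 0 else 3*q+2-i)" for i
  have "cycle_col W g (2*q+2) \<in> arc_col W ` \<phi> ` ({..<2*q+3} - {2*q+2})"
  proof (rule chord_col_in_cycle_arcs[OF assms(1)])
    show "is_cycle g"
      using q_pos by (auto simp: is_cycle_def g_def inj_on_def)
    show "\<forall>i<2*q+3. i \<noteq> 2*q+2 \<longrightarrow> cycle_col W g i = arc_col W (\<phi> i) \<and> \<phi> i < 6*q+3"
    proof (intro allI impI)
      fix i assume i: "i < 2*q+3" "i \<noteq> 2*q+2"
      show "cycle_col W g i = arc_col W (\<phi> i) \<and> \<phi> i < 6*q+3"
      proof (cases "i = q")
        case True
        have "cycle_col W g i = chord_col W 0 (2*q+2)"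
          by (rule cycle_col_eq_chord_col) (use True q_pos in \<open>auto simp: g_def\<close>)
        moreover have "\<phi> i = 0"
          using True by (simp add: \<phi>_def)
        ultimately show ?thesis
          using known by simp
      next
        case False
        with i show ?thesis
          using q_pos by (intro conjI cycle_col_arcI; auto simp: g_def \<phi>_def)
      qed
    qed
    show "inj_on \<phi> ({..<2*q+3} - {2*q+2})"
      using q_pos by (auto simp: inj_on_def \<phi>_def)
  qed simp
  moreover have "\<phi> ` ({..<2*q+3} - {2*q+2}) \<subseteq> {0} \<union> {q+1..2*q+1} \<union> {5*q+3..6*q+2}"
    by (auto simp: \<phi>_def)
  moreover have "cycle_col W g (2*q+2) = chord_col W (q+1) (5*q+3)"
    by (rule cycle_col_eq_chord_col) (use q_pos in \<open>auto simp: g_def\<close>)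
  ultimately show ?thesis
    by auto
qed

lemma inner_chord_positions_inconsistent:
  fixes x y z :: nat
  assumes x: "x \<in> {q+1..2*q+1} \<union> {3*q+2..4*q+2}"
    and y: "y \<in> {0} \<union> {3*q+2..4*q+2} \<union> {5*q+3..6*q+2}"
    and z: "z \<in> {0} \<union> {q+1..2*q+1} \<union> {5*q+3..6*q+2}"
    and yz: "y = z \<or> y \<in> {q+1..3*q+1} \<or> z \<in> {q+1..3*q+1}"
    and zx: "z = x \<or> z \<in> {3*q+2..5*q+2} \<or> x \<in> {3*q+2..5*q+2}"
    and xy: "x = y \<or> x \<in> {..q} \<union> {5*q+3..6*q+2} \<or> y \<in> {..q} \<union> {5*q+3..6*q+2}"
    and zy': "z = y \<or> z \<in> {1..q} \<union> {3*q+2..4*q+2} \<or> y \<in> {1..q} \<union> {3*q+2..4*q+2}"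
    and yx': "y = x \<or> y \<in> {q+1..2*q+1} \<union> {4*q+3..5*q+2} \<or> x \<in> {q+1..2*q+1} \<union> {4*q+3..5*q+2}"
    and xz': "x = z \<or> x \<in> {0} \<union> {2*q+2..3*q+1} \<union> {5*q+3..6*q+2}
      \<or> z \<in> {0} \<union> {2*q+2..3*q+1} \<union> {5*q+3..6*q+2}"
  shows False
proof (cases "x \<le> 2*q+1")
  case True
  with x z zx have "z = x"
    by auto
  from True x y xy have "y \<in> {0} \<union> {5*q+3..6*q+2}"
    by auto
  with True x zy' \<open>z = x\<close> show False
    by auto
next
  case False
  with x y yx' have "y = x"
    by auto
  with False x z yz have "z \<in> {q+1..2*q+1}"
    by auto
  with False x xz' show False
    by auto
qed

lemma span_chords_not_all_first_arcs:
  assumes "rainbow W"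
    and h0: "chord_col W 0 (2*q+2) = arc_col W 0"
    and h1: "chord_col W (2*q+1) (4*q+3) = arc_col W (2*q+1)"
    and h2: "chord_col W (4*q+2) 1 = arc_col W (4*q+2)"
  shows False
proof -
  obtain x where x: "x \<in> {q+1..2*q+1} \<union> {3*q+2..4*q+2}" "chord_col W (q+1) (3*q+2) = arc_col W x"
    using chord_q1_3q2_given_2q1_4q3[OF assms(1) h1] by blast
  obtain y where y: "y \<in> {0} \<union> {3*q+2..4*q+2} \<union> {5*q+3..6*q+2}"
      "chord_col W (3*q+2) (5*q+3) = arc_col W y"
    using chord_3q2_5q3_given_4q2_1[OF assms(1) h2] by blast
  obtain z where z: "z \<in> {0} \<union> {q+1..2*q+1} \<union> {5*q+3..6*q+2}"
      "chord_col W (q+1) (5*q+3) = arc_col W z"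
    using chord_q1_5q3_given_0_2q2[OF assms(1) h0] by blast
  have xyz: "x < 6*q+3" "y < 6*q+3" "z < 6*q+3"
    using x(1) y(1) z(1) by auto
  show False
  proof (rule inner_chord_positions_inconsistent[OF x(1) y(1) z(1)])
    show "y = z \<or> y \<in> {q+1..3*q+1} \<or> z \<in> {q+1..3*q+1}"
      by (rule chords_3q2_5q3_q1_5q3[OF assms(1) y(2) xyz(2) z(2) xyz(3)])
    show "z = x \<or> z \<in> {3*q+2..5*q+2} \<or> x \<in> {3*q+2..5*q+2}"
      by (rule chords_q1_5q3_q1_3q2[OF assms(1) z(2) xyz(3) x(2) xyz(1)])
    show "x = y \<or> x \<in> {..q} \<union> {5*q+3..6*q+2} \<or> y \<in> {..q} \<union> {5*q+3..6*q+2}"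
      by (rule chords_q1_3q2_3q2_5q3[OF assms(1) x(2) xyz(1) y(2) xyz(2)])
    show "z = y \<or> z \<in> {1..q} \<union> {3*q+2..4*q+2} \<or> y \<in> {1..q} \<union> {3*q+2..4*q+2}"
      by (rule chords_q1_5q3_3q2_5q3_given_4q2_1[OF assms(1) h2 z(2) xyz(3) y(2) xyz(2)])
    show "y = x \<or> y \<in> {q+1..2*q+1} \<union> {4*q+3..5*q+2} \<or> x \<in> {q+1..2*q+1} \<union> {4*q+3..5*q+2}"
      by (rule chords_3q2_5q3_q1_3q2_given_2q1_4q3[OF assms(1) h1 y(2) xyz(2) x(2) xyz(1)])
    show "x = z \<or> x \<in> {0} \<union> {2*q+2..3*q+1} \<union> {5*q+3..6*q+2}
        \<or> z \<in> {0} \<union> {2*q+2..3*q+1} \<union> {5*q+3..6*q+2}"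
      by (rule chords_q1_3q2_q1_5q3_given_0_2q2[OF assms(1) h0 x(2) xyz(1) z(2) xyz(3)])
  qed
qed

lemma no_long_rainbow: "\<not> has_rainbow_cycle c (6*q+3)"
proof
  assume "has_rainbow_cycle c (6*q+3)"
  then obtain W where W: "rainbow W"
    by (auto simp: has_rainbow_cycle_def)
  from span_chords_orientation[OF W] show False
  proof
    assume "chord_col W 0 (2*q+2) = arc_col W 0 \<and> chord_col W (2*q+1) (4*q+3) = arc_col W (2*q+1)
      \<and> chord_col W (4*q+2) 1 = arc_col W (4*q+2)"
    then show False
      using span_chords_not_all_first_arcs[OF W] by blast
  next
    assume last: "chord_col W 0 (2*q+2) = arc_col W (2*q+1)
      \<and> chord_col W (2*q+1) (4*q+3) = arc_col W (4*q+2) \<and> chord_col W (4*q+2) 1 = arc_col W 0"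
    have len: "length W = 6*q+3"
      using W by (simp add: rainbow_cycle_def)
    have "rainbow (mirror W)"
      unfolding mirror_def by (intro rainbow_cycle_rev rainbow_cycle_rotate W)
    moreover have "chord_col (mirror W) 0 (2*q+2) = chord_col W (2*q+2) 0"
      "chord_col (mirror W) (2*q+1) (4*q+3) = chord_col W 1 (4*q+2)"
      "chord_col (mirror W) (4*q+2) 1 = chord_col W (4*q+3) (2*q+1)"
      by (rule chord_col_mirror; use q_pos in \<open>auto simp: len wrap_eq_def\<close>)+
    moreover have "arc_col (mirror W) 0 = arc_col W (2*q+1)"
      "arc_col (mirror W) (2*q+1) = arc_col W 0"
      "arc_col (mirror W) (4*q+2) = arc_col W (4*q+2)"
      by (rule arc_col_mirror; use q_pos in \<open>auto simp: len wrap_eq_def\<close>)+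
    ultimately show False
      using span_chords_not_all_first_arcs[of "mirror W"] last by (simp add: chord_col_commute)
  qed
qed

end

theorem lemma12:
  fixes c :: "'v set \<Rightarrow> 'c" and n :: nat
  assumes "odd n" and "n > 3"
    and "\<not> has_rainbow_cycle c n"
  shows "\<not> has_rainbow_cycle c (3 * n - 6)"
proof -
  define q where "q = (n - 3) div 2"
  have n: "n = 2*q+3" "1 \<le> q"
    using assms(1,2) by (auto simp: q_def elim!: oddE)
  interpret no_short_rainbow c q
    by unfold_locales (use n assms(3) in auto)
  have "3 * n - 6 = 6*q+3"
    using n by simp
  with no_long_rainbow show ?thesis
    by simp
qed

end
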